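(* Every word-representable graph $G=(V,E)$ admits a border-free word representing it, i.e. a word $w$ representing $G$ that cannot be written as $w=uvu$ with $u$ non-empty.
   Context: A graph $G=(V,E)$ is word-representable if there is a word $w$ over the alphabet $V$, containing every letter of $V$, such that for all distinct $x,y\in V$, the letters $x$ and $y$ alternate in $w$ (i.e. deleting all letters other than $x,y$ from $w$ yields a word of the form $xyxy\cdots$ or $yxyx\cdots$, of even or odd length) if and only if $xy\in E$; such $w$ is said to represent $G$. A word $w$ is bordered if $w=uvu$ for some words $u,v$ with $u$ non-empty; otherwise it is border-free. *)

theory Defs
  imports Main
begin

definition alternate :: "'a list \<Rightarrow> 'a \<Rightarrow> 'a \<Rightarrow> bool" where
  "alternate w x y \<longleftrightarrow>
     (let u = filter (\<lambda>z. z = x \<or> z = y) w in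
        \<forall>i. Suc i < length u \<longrightarrow> u ! i \<noteq> u ! Suc i)"

definition represents :: "'a list \<Rightarrow> 'a set \<Rightarrow> ('a \<Rightarrow> 'a \<Rightarrow> bool) \<Rightarrow> bool" where
  "represents w V E \<longleftrightarrow> set w = V \<and>
     (\<forall>x\<in>V. \<forall>y\<in>V. x \<noteq> y \<longrightarrow> (alternate w x y \<longleftrightarrow> E x y))"

definition word_representable :: "'a set \<Rightarrow> ('a \<Rightarrow> 'a \<Rightarrow> bool) \<Rightarrow> bool" where
  "word_representable V E \<longleftrightarrow> (\<exists>w. represents w V E)"

definition bordered :: "'a list \<Rightarrow> bool" where
  "bordered w \<longleftrightarrow> (\<exists>u v. u \<noteq> [] \<and> w = u @ v @ u)"

end

theory Submission
  imports Defs "HOL-Library.List_Lexorder"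
begin

text \<open>A graph that is word-representable has a uniform representant, i.e. one in which all
  letters occur equally often: append, as often as needed, each letter that is still in deficit,
  in the order of the last occurrences. Uniform representants are closed under rotation, since in
  a balanced alternating word over two letters the first and last letters differ, and a uniform
  representant \<open>z\<^sup>n\<close> has \<open>z\<close> as uniform representant. Now take a shortest uniform
  representant and its lexicographically least rotation \<open>r\<close> (for some order of the alphabet).
  If \<open>r = uvu\<close> with \<open>u\<close> nonempty, comparing \<open>r\<close> with its rotations \<open>uuv\<close> and \<open>vuu\<close>
  forces \<open>uv = vu\<close>, so \<open>r\<close> is a proper power \<open>z\<^sup>n\<close>; then \<open>z\<close> is a shorter uniform
  representant, a contradiction.\<close>

lemma last_remdups: "last (remdups xs) = last xs"
  by (induction xs) auto

lemma count_list_filter: "P x \<Longrightarrow> count_list (filter P xs) x = count_list xs x"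
  by (induction xs) auto

lemma count_list_distinct: "distinct xs \<Longrightarrow> count_list xs x = (if x \<in> set xs then 1 else 0)"
  by (induction xs) auto

lemma count_list_rotate [simp]: "count_list (rotate n xs) x = count_list xs x"
proof (induction n)
  case (Suc n)
  then show ?case by (cases "rotate n xs") auto
qed simp

lemma count_list_concat_replicate: "count_list (concat (replicate m xs)) x = m * count_list xs x"
  by (induction m) auto

lemma filter_rotate1:
  "filter P (rotate1 xs) = (if xs \<noteq> [] \<and> P (hd xs) then rotate1 (filter P xs) else filter P xs)"
  by (cases xs) auto

lemma filter_rotate: "\<exists>k. filter P (rotate n xs) = rotate k (filter P xs)"
proof (induction n)
  case 0
  show ?case by (intro exI[of _ 0]) simp
next
  case (Suc n)
  then obtain k where "filter P (rotate n xs) = rotate k (filter P xs)" by blast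
  then show ?case
    by (simp add: filter_rotate1) (metis rotate_Suc)
qed

lemma distinct_adj_two_letters_count:
  assumes "distinct_adj (a # u)" "set (a # u) \<subseteq> {a, b}" "a \<noteq> b"
  shows "count_list (a # u) a = count_list (a # u) b + (if last (a # u) = a then 1 else 0)"
  using assms
proof (induction u arbitrary: a b)
  case Nil
  then show ?case by simp
next
  case (Cons c v)
  then have "c = b" by (auto simp: distinct_adj_Cons)
  with Cons.prems
  have "count_list (b # v) b = count_list (b # v) a + (if last (b # v) = b then 1 else 0)"
    by (intro Cons.IH) (auto simp: distinct_adj_Cons)
  moreover have "last (b # v) \<in> {a, b}"
    using Cons.prems \<open>c = b\<close> by (metis last_in_set list.distinct(1) set_subset_Cons subsetD)
  ultimately show ?case using Cons.prems(3) \<open>c = b\<close> by (auto split: if_splits)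
qed

lemma distinct_adj_two_letters_cases:
  assumes "distinct_adj u" "set u \<subseteq> {x, y}" "x \<noteq> y" "u \<noteq> []"
  obtains "hd u = x" "count_list u x = count_list u y + (if last u = x then 1 else 0)"
    | "hd u = y" "count_list u y = count_list u x + (if last u = y then 1 else 0)"
proof -
  obtain a v where u: "u = a # v" using assms(4) by (cases u) auto
  have "a = x \<or> a = y" using assms(2) u by auto
  then show ?thesis
  proof
    assume "a = x"
    then show ?thesis
      using that(1) distinct_adj_two_letters_count[of a v y] assms u by auto
  next
    assume "a = y"
    then show ?thesis
      using that(2) distinct_adj_two_letters_count[of a v x] assms u by auto
  qed
qed

lemma distinct_adj_balanced_hd_neq_last:
  assumes "distinct_adj u" "set u \<subseteq> {x, y}" "x \<noteq> y" "count_list u x = count_list u y"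
    and "u \<noteq> []"
  shows "hd u \<noteq> last u"
  using distinct_adj_two_letters_cases[OF assms(1-3,5)] assms(4) by cases (auto split: if_splits)

lemma distinct_adj_unbalanced_last:
  assumes "distinct_adj u" "set u \<subseteq> {x, y}" "x \<noteq> y" "count_list u x < count_list u y"
  shows "u \<noteq> [] \<and> last u = y"
proof -
  have "u \<noteq> []" using assms(4) by auto
  from distinct_adj_two_letters_cases[OF assms(1-3) this] show ?thesis
    using \<open>u \<noteq> []\<close> assms(4) by cases (auto split: if_splits)
qed

lemma distinct_adj_append_remdups:
  assumes "distinct_adj xs" "card (set xs) \<ge> 2"
  shows "distinct_adj (xs @ remdups xs)"
proof -
  have len: "length (remdups xs) \<ge> 2" using assms(2) by (simp add: length_remdups_card_conv)
  then have "hd (remdups xs) \<noteq> last (remdups xs)"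
    by (subst hd_conv_nth, force, subst last_conv_nth, force, subst nth_eq_iff_index_eq) auto
  moreover have "distinct_adj (remdups xs)"
    by (simp add: distinct_adj_conv_nth nth_eq_iff_index_eq)
  ultimately show ?thesis
    using assms(1) len by (auto simp: distinct_adj_append_iff last_remdups)
qed

lemma distinct_adj_rotate1_iff_balanced:
  assumes "set xs \<subseteq> {x, y}" "x \<noteq> y" "count_list xs x = count_list xs y"
  shows "distinct_adj (rotate1 xs) \<longleftrightarrow> distinct_adj xs"
proof (cases xs)
  case Nil
  then show ?thesis by simp
next
  case (Cons a v)
  have "distinct_adj (v @ [a])" if "distinct_adj (a # v)"
    using distinct_adj_balanced_hd_neq_last[OF that, of x y] that assms Cons
    by (auto simp: distinct_adj_append_iff distinct_adj_Cons last_ConsR)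
  moreover have "distinct_adj (a # v)" if "distinct_adj (v @ [a])"
    using distinct_adj_balanced_hd_neq_last[OF that, of x y] that assms Cons
    by (auto simp: distinct_adj_append_iff distinct_adj_Cons hd_append split: if_splits)
  ultimately show ?thesis using Cons by auto
qed

lemma distinct_adj_rotate_iff_balanced:
  assumes "set xs \<subseteq> {x, y}" "x \<noteq> y" "count_list xs x = count_list xs y"
  shows "distinct_adj (rotate n xs) \<longleftrightarrow> distinct_adj xs"
proof (induction n)
  case (Suc n)
  have "distinct_adj (rotate1 (rotate n xs)) \<longleftrightarrow> distinct_adj (rotate n xs)"
    by (rule distinct_adj_rotate1_iff_balanced[of _ x y]) (use assms in simp_all)
  with Suc show ?case by simp
qed simp

lemma distinct_adj_concat_replicate:
  assumes "distinct_adj xs" "xs \<noteq> [] \<Longrightarrow> hd xs \<noteq> last xs"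
  shows "distinct_adj (concat (replicate m xs))"
proof (induction m)
  case (Suc m)
  have "hd (concat (replicate m xs)) = hd xs" if "concat (replicate m xs) \<noteq> []"
    using that by (cases m) auto
  with Suc assms show ?case by (auto simp: distinct_adj_append_iff)
qed simp

lemma alternate_iff_distinct_adj:
  "alternate w x y \<longleftrightarrow> distinct_adj (filter (\<lambda>z. z = x \<or> z = y) w)"
  by (simp add: alternate_def distinct_adj_conv_nth Let_def)

lemma alternate_commute: "alternate w x y \<longleftrightarrow> alternate w y x"
  by (simp add: alternate_iff_distinct_adj disj_commute)

definition uniform :: "'a list \<Rightarrow> bool" where
  "uniform w \<longleftrightarrow> (\<forall>x\<in>set w. \<forall>y\<in>set w. count_list w x = count_list w y)"

text \<open>One copy of every letter occurring fewer than \<open>K\<close> times is appended, in the order of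
  the last occurrences of these letters (this is the order that \<open>remdups\<close> keeps).\<close>
definition pad :: "nat \<Rightarrow> 'a list \<Rightarrow> 'a list" where
  "pad K w = w @ remdups (filter (\<lambda>z. count_list w z < K) w)"

lemma set_pad [simp]: "set (pad K w) = set w"
  by (auto simp: pad_def)

lemma count_list_pad:
  assumes "z \<in> set w" "count_list w z \<le> K"
  shows "count_list (pad K w) z = min K (Suc (count_list w z))"
proof -
  have "count_list (remdups (filter (\<lambda>z. count_list w z < K) w)) z
      = (if count_list w z < K then 1 else 0)"
    using assms(1) by (simp add: count_list_distinct)
  then show ?thesis using assms(2) by (simp add: pad_def)
qed

lemma alternate_pad_ordered:
  assumes "\<forall>z\<in>set w. count_list w z \<le> K" "x \<in> set w" "y \<in> set w" "x \<noteq> y"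
    and "count_list w x \<le> count_list w y"
  shows "alternate (pad K w) x y \<longleftrightarrow> alternate w x y"
proof -
  define L where "L = filter (\<lambda>z. z = x \<or> z = y) w"
  define D where "D = filter (\<lambda>z. (z = x \<or> z = y) \<and> count_list w z < K) w"
  have filter_pad: "filter (\<lambda>z. z = x \<or> z = y) (pad K w) = L @ remdups D"
    by (simp add: pad_def L_def D_def remdups_filter[symmetric] conj_commute)
  have count_L: "count_list L z = count_list w z" if "z = x \<or> z = y" for z
    unfolding L_def using that by (rule count_list_filter)
  have "distinct_adj (L @ remdups D)" if "distinct_adj L"
  proof -
    consider "\<not> count_list w x < K" | "count_list w x < K" "\<not> count_list w y < K"
      | "count_list w x < K" "count_list w y < K"
      by blast
    then show ?thesis
    proof cases
      case 1
      then have "D = []" using assms(5) by (auto simp: D_def filter_empty_conv)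
      then show ?thesis using that by simp
    next
      case 2
      then have "D = filter (\<lambda>z. z = x) w"
        unfolding D_def by (metis (mono_tags, lifting) filter_cong)
      also have "remdups \<dots> = [x]" using assms(2) by (induction w) (auto simp: filter_empty_conv)
      finally have "remdups D = [x]" .
      moreover have "L \<noteq> [] \<and> last L = y"
        using distinct_adj_unbalanced_last[OF that _ assms(4)] 2 count_L by (auto simp: L_def)
      ultimately show ?thesis using that assms(4) by (simp add: distinct_adj_append_iff)
    next
      case 3
      then have "D = L" unfolding D_def L_def by (metis (mono_tags, lifting) filter_cong)
      moreover have "set L = {x, y}" using assms(2,3) by (auto simp: L_def)
      ultimately show ?thesis using distinct_adj_append_remdups[OF that] assms(4) by simp
    qed
  qed
  then show ?thesis
    unfolding alternate_iff_distinct_adj filter_pad by (auto simp: L_def)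
qed

lemma alternate_pad:
  assumes "\<forall>z\<in>set w. count_list w z \<le> K" "x \<in> set w" "y \<in> set w" "x \<noteq> y"
  shows "alternate (pad K w) x y \<longleftrightarrow> alternate w x y"
  using alternate_pad_ordered[OF assms] alternate_pad_ordered[OF assms(1,3,2) assms(4)[symmetric]]
    alternate_commute by (metis nat_le_linear)

lemma represents_pad:
  assumes "represents w V E" "\<forall>z\<in>set w. count_list w z \<le> K"
  shows "represents (pad K w) V E"
  using assms alternate_pad[OF assms(2)] unfolding represents_def by auto

lemma represents_pad_iterate:
  assumes "represents w V E" "\<forall>z\<in>set w. count_list w z \<le> K"
  shows "represents ((pad K ^^ n) w) V E \<and>
    (\<forall>z\<in>set w. count_list ((pad K ^^ n) w) z = min K (count_list w z + n))"
proof (induction n)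
  case 0
  show ?case using assms by simp
next
  case (Suc n)
  have set_iterate: "set ((pad K ^^ n) w) = set w"
    using Suc assms(1) by (simp add: represents_def)
  have bound: "\<forall>z\<in>set ((pad K ^^ n) w). count_list ((pad K ^^ n) w) z \<le> K"
    using Suc set_iterate by simp
  then show ?case
    using Suc represents_pad[OF _ bound] set_iterate by (simp add: count_list_pad min_def)
qed

lemma uniform_representation_exists:
  assumes "represents w V E"
  shows "\<exists>w'. represents w' V E \<and> uniform w'"
proof -
  define K where "K = Max (count_list w ` set w)"
  have "\<forall>z\<in>set w. count_list w z \<le> K" by (simp add: K_def)
  from represents_pad_iterate[OF assms this, of K]
  have "represents ((pad K ^^ K) w) V E" "\<forall>z\<in>set w. count_list ((pad K ^^ K) w) z = K"
    by auto
  moreover have "set ((pad K ^^ K) w) = set w"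
    using assms \<open>represents ((pad K ^^ K) w) V E\<close> by (simp add: represents_def)
  ultimately show ?thesis unfolding uniform_def by auto
qed

lemma uniform_rotate: "uniform w \<Longrightarrow> uniform (rotate n w)"
  by (simp only: uniform_def set_rotate count_list_rotate)

lemma alternate_rotate:
  assumes "uniform w" "x \<in> set w" "y \<in> set w" "x \<noteq> y"
  shows "alternate (rotate n w) x y \<longleftrightarrow> alternate w x y"
proof -
  define L where "L = filter (\<lambda>z. z = x \<or> z = y) w"
  obtain k where k: "filter (\<lambda>z. z = x \<or> z = y) (rotate n w) = rotate k L"
    unfolding L_def using filter_rotate by blast
  have "count_list w x = count_list w y"
    using assms unfolding uniform_def by blast
  then have "count_list L x = count_list L y"
    unfolding L_def by (simp add: count_list_filter)
  then have "distinct_adj (rotate k L) \<longleftrightarrow> distinct_adj L"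
    using assms(4) by (intro distinct_adj_rotate_iff_balanced[of _ x y]) (auto simp: L_def)
  then show ?thesis
    unfolding alternate_iff_distinct_adj k by (simp add: L_def)
qed

lemma represents_rotate:
  assumes "represents w V E" "uniform w"
  shows "represents (rotate n w) V E"
  using assms alternate_rotate[OF assms(2)] unfolding represents_def by (simp add: uniform_rotate)

lemma represents_concat_replicate_root:
  assumes "represents (concat (replicate m z)) V E" "uniform (concat (replicate m z))" "m \<ge> 1"
  shows "represents z V E \<and> uniform z"
proof -
  have set_power: "set (concat (replicate m z)) = set z"
    using assms(3) by (cases m) auto
  have uniform: "uniform z"
    unfolding uniform_def
  proof (intro ballI)
    fix x y assume "x \<in> set z" "y \<in> set z"
    then have "m * count_list z x = m * count_list z y"
      using assms(2) unfolding uniform_def set_power count_list_concat_replicate by blast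
    then show "count_list z x = count_list z y" using assms(3) by simp
  qed
  have "alternate (concat (replicate m z)) x y \<longleftrightarrow> alternate z x y"
    if "x \<in> set z" "y \<in> set z" "x \<noteq> y" for x y
  proof -
    define L where "L = filter (\<lambda>c. c = x \<or> c = y) z"
    have "count_list z x = count_list z y"
      using uniform that unfolding uniform_def by blast
    then have "count_list L x = count_list L y"
      unfolding L_def by (simp add: count_list_filter)
    then have "distinct_adj L \<Longrightarrow> distinct_adj (concat (replicate m L))"
      using distinct_adj_balanced_hd_neq_last[of L x y] that(3)
      by (intro distinct_adj_concat_replicate) (auto simp: L_def)
    moreover have "distinct_adj (concat (replicate m L)) \<Longrightarrow> distinct_adj L"
      using assms(3) by (cases m) auto
    moreover have "filter (\<lambda>c. c = x \<or> c = y) (concat (replicate m z)) = concat (replicate m L)"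
      by (simp add: L_def filter_concat)
    ultimately show ?thesis
      unfolding alternate_iff_distinct_adj L_def by auto
  qed
  then have "represents z V E"
    using assms(1) unfolding represents_def set_power by auto
  with uniform show ?thesis by blast
qed

lemma append_le_cancel_left: "xs @ ys \<le> xs @ zs \<longleftrightarrow> (ys :: 'a::linorder list) \<le> zs"
  by (induction xs) auto

lemma append_less_append_same_length:
  "length xs = length ys \<Longrightarrow> (xs :: 'a::linorder list) < ys \<Longrightarrow> xs @ us < ys @ vs"
proof (induction xs arbitrary: ys)
  case (Cons x xs)
  then show ?case by (cases ys) auto
qed simp

lemma least_rotation_border_commute:
  fixes xs :: "'a::linorder list"
  assumes least: "\<forall>j. xs \<le> rotate j xs" and border: "xs = u @ v @ u"
  shows "u @ v = v @ u"
proof -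
  have "u @ v @ u \<le> u @ u @ v"
    using least[rule_format, of "length (u @ v)"] border rotate_append[of "u @ v" u] by simp
  then have "v @ u \<le> u @ v" by (simp add: append_le_cancel_left)
  moreover have "\<not> v @ u < u @ v"
  proof
    assume "v @ u < u @ v"
    then have "(v @ u) @ u < (u @ v) @ u" by (rule append_less_append_same_length[rotated]) simp
    moreover have "u @ v @ u \<le> v @ u @ u"
      using least[rule_format, of "length u"] border rotate_append[of u "v @ u"] by simp
    ultimately show False by simp
  qed
  ultimately show ?thesis by simp
qed

lemma exists_least_rotation:
  fixes xs :: "'a::linorder list"
  shows "\<exists>k. \<forall>j. rotate k xs \<le> rotate j (rotate k xs)"
proof -
  define M where "M = (\<lambda>j. rotate j xs) ` {..length xs}"
  have "finite M" "M \<noteq> {}" by (auto simp: M_def)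
  then have "Min M \<in> M" by (rule Min_in)
  then obtain k where k: "rotate k xs = Min M" by (metis M_def imageE)
  have "rotate j (rotate k xs) \<in> M" for j
  proof (cases "xs = []")
    case False
    have "rotate j (rotate k xs) = rotate ((j + k) mod length xs) xs"
      by (simp add: rotate_rotate rotate_conv_mod[of "j + k"])
    with False show ?thesis by (auto simp: M_def)
  qed (auto simp: M_def)
  then show ?thesis using k \<open>finite M\<close> by (metis Min_le)
qed

lemma bordered_least_rotation_is_power:
  fixes f :: "'a \<Rightarrow> 'b::linorder"
  assumes "inj_on f (set xs)" "\<forall>j. map f xs \<le> map f (rotate j xs)" "bordered xs"
  shows "\<exists>n z. 1 < n \<and> xs = concat (replicate n z)"
proof -
  obtain u v where uv: "u \<noteq> []" "xs = u @ v @ u"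
    using assms(3) unfolding bordered_def by blast
  have "\<forall>j. map f xs \<le> rotate j (map f xs)"
    using assms(2) by (simp add: rotate_map)
  then have "map f u @ map f v = map f v @ map f u"
    using uv(2) by (intro least_rotation_border_commute[of "map f xs"]) simp_all
  then have "map f (u @ v) = map f (v @ u)" by simp
  moreover have "inj_on f (set (u @ v) \<union> set (v @ u))"
    using assms(1) uv(2) by (auto intro: inj_on_subset)
  ultimately have "u @ v = v @ u" using inj_on_map_eq_map by blast
  then have "u @ (v @ u) = (v @ u) @ u" by simp
  from comm_append_is_replicate[OF _ _ this] uv show ?thesis by (metis append_is_Nil_conv)
qed

theorem mainTheorem1:
  fixes V :: "'a set" and E :: "'a \<Rightarrow> 'a \<Rightarrow> bool"
  assumes "\<forall>x y. E x y \<longrightarrow> x \<in> V \<and> y \<in> V"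
    and "\<forall>x y. E x y \<longleftrightarrow> E y x"
    and "\<forall>x. \<not> E x x"
    and "word_representable V E"
  shows "\<exists>w. represents w V E \<and> \<not> bordered w"
proof -
  obtain w0 where "represents w0 V E" using assms(4) unfolding word_representable_def by blast
  then obtain w1 where "represents w1 V E \<and> uniform w1" using uniform_representation_exists by blast
  then obtain w where w: "represents w V E" "uniform w"
    and shortest: "\<And>w'. represents w' V E \<Longrightarrow> uniform w' \<Longrightarrow> length w \<le> length w'"
    using ex_has_least_nat[of "\<lambda>w. represents w V E \<and> uniform w" w1 length] by blast
  obtain f :: "'a \<Rightarrow> nat" where f: "inj_on f (set w)"
    using finite_imp_inj_to_nat_seg[of "set w"] by blast
  obtain k where least: "\<forall>j. map f (rotate k w) \<le> map f (rotate j (rotate k w))"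
    using exists_least_rotation[of "map f w"] by (auto simp: rotate_map)
  define r where "r = rotate k w"
  have r: "represents r V E" "uniform r"
    using w by (simp_all add: r_def represents_rotate uniform_rotate)
  have "\<not> bordered r"
  proof
    assume "bordered r"
    then obtain n z where "1 < n" "r = concat (replicate n z)"
      using bordered_least_rotation_is_power[of f r] f least by (auto simp: r_def)
    with r have "length w \<le> length z" "length r = n * length z"
      using shortest represents_concat_replicate_root[of n z V E]
      by (auto simp: length_concat sum_list_replicate)
    moreover have "r \<noteq> []" using \<open>bordered r\<close> by (auto simp: bordered_def)
    ultimately show False using \<open>1 < n\<close> by (simp add: r_def)
  qed
  with r show ?thesis by blast
qed

end
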